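(* Let $(X,\mathfrak{m})$ be a measurable space with $\mathfrak{m}$ an infinite $\sigma$-algebra containing every finite subset of $X$, and let $X^*=\mathfrak{m}^\beta\setminus e(X)$. Then every countable union of nowhere dense subsets of $X^*$ is nowhere dense in $X^*$.
   Context: An $\mathfrak{m}$-filter is a family $p\subseteq\mathfrak{m}$ with $\emptyset\notin p$, $X\in p$, closed under supersets belonging to $\mathfrak{m}$ and under finite intersections; an $\mathfrak{m}$-ultrafilter is a maximal $\mathfrak{m}$-filter; $\mathfrak{m}^\beta$ is the set of all $\mathfrak{m}$-ultrafilters, topologized by the base $\{\widehat{A}:A\in\mathfrak{m}\}$ where $\widehat{A}=\{p\in\mathfrak{m}^\beta:A\in p\}$. The map $e:X\to\mathfrak{m}^\beta$ is $e(x)=\{A\in\mathfrak{m}:x\in A\}$. $X^*$ carries the subspace topology. *)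

theory Defs
  imports "HOL-Analysis.Analysis"
begin

definition m_filter :: "'a set \<Rightarrow> 'a set set \<Rightarrow> 'a set set \<Rightarrow> bool" where
  "m_filter X M p \<longleftrightarrow> p \<subseteq> M \<and> {} \<notin> p \<and> X \<in> p
     \<and> (\<forall>A\<in>p. \<forall>B\<in>M. A \<subseteq> B \<longrightarrow> B \<in> p)
     \<and> (\<forall>A\<in>p. \<forall>B\<in>p. A \<inter> B \<in> p)"

definition m_ultrafilter :: "'a set \<Rightarrow> 'a set set \<Rightarrow> 'a set set \<Rightarrow> bool" where
  "m_ultrafilter X M p \<longleftrightarrow> m_filter X M p \<and> (\<forall>q. m_filter X M q \<and> p \<subseteq> q \<longrightarrow> q = p)"

definition mbeta :: "'a set \<Rightarrow> 'a set set \<Rightarrow> 'a set set set" where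
  "mbeta X M = {p. m_ultrafilter X M p}"

definition mhat :: "'a set \<Rightarrow> 'a set set \<Rightarrow> 'a set \<Rightarrow> 'a set set set" where
  "mhat X M A = {p \<in> mbeta X M. A \<in> p}"

definition mbeta_topology :: "'a set \<Rightarrow> 'a set set \<Rightarrow> 'a set set topology" where
  "mbeta_topology X M = topology_generated_by {mhat X M A | A. A \<in> M}"

definition membed :: "'a set set \<Rightarrow> 'a \<Rightarrow> 'a set set" where
  "membed M x = {A \<in> M. x \<in> A}"

definition Xstar :: "'a set \<Rightarrow> 'a set set \<Rightarrow> 'a set set set" where
  "Xstar X M = mbeta X M - membed M ` X"

definition Xstar_topology :: "'a set \<Rightarrow> 'a set set \<Rightarrow> 'a set set topology" where
  "Xstar_topology X M = subtopology (mbeta_topology X M) (Xstar X M)"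

definition nowhere_dense :: "'b topology \<Rightarrow> 'b set \<Rightarrow> bool" where
  "nowhere_dense T S \<longleftrightarrow> S \<subseteq> topspace T \<and> T interior_of (T closure_of S) = {}"

end

theory Submission
  imports Defs
begin

(* The sets hat A \<inter> X* with A \<in> m form a base of X*; such a set is nonempty iff A is infinite,
   and hat B \<inter> X* \<subseteq> hat A \<inter> X* whenever B - A is finite, because a nonprincipal
   ultrafilter contains no finite set.  Hence N is nowhere dense in X* iff every infinite A \<in> m
   contains an infinite B \<in> m with hat B \<inter> X* disjoint from N.  Given nowhere dense N_0, N_1, ...
   and an infinite A, shrink A step by step to infinite A \<supseteq> A_0 \<supseteq> A_1 \<supseteq> ... with
   hat A_(n+1) avoiding N_n.  A countable infinite pseudo-intersection B of the A_n lies in the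
   sigma-algebra, and hat B \<inter> X* avoids every N_n. *)

lemma m_filter_sets: "m_filter X M p \<Longrightarrow> A \<in> p \<Longrightarrow> A \<in> M"
  unfolding m_filter_def by blast

lemma m_filter_empty: "m_filter X M p \<Longrightarrow> {} \<notin> p"
  unfolding m_filter_def by blast

lemma m_filter_space: "m_filter X M p \<Longrightarrow> X \<in> p"
  unfolding m_filter_def by blast

lemma m_filter_upward: "m_filter X M p \<Longrightarrow> A \<in> p \<Longrightarrow> B \<in> M \<Longrightarrow> A \<subseteq> B \<Longrightarrow> B \<in> p"
  unfolding m_filter_def by blast

lemma m_filter_Int: "m_filter X M p \<Longrightarrow> A \<in> p \<Longrightarrow> B \<in> p \<Longrightarrow> A \<inter> B \<in> p"
  unfolding m_filter_def by blast

lemma m_filterI: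
  assumes "p \<subseteq> M" "{} \<notin> p" "X \<in> p"
    and "\<And>A B. A \<in> p \<Longrightarrow> B \<in> M \<Longrightarrow> A \<subseteq> B \<Longrightarrow> B \<in> p"
    and "\<And>A B. A \<in> p \<Longrightarrow> B \<in> p \<Longrightarrow> A \<inter> B \<in> p"
  shows "m_filter X M p"
  unfolding m_filter_def using assms by blast

lemma m_ultrafilter_filter: "m_ultrafilter X M p \<Longrightarrow> m_filter X M p"
  unfolding m_ultrafilter_def by blast

lemma m_ultrafilter_maximal:
  "m_ultrafilter X M p \<Longrightarrow> m_filter X M q \<Longrightarrow> p \<subseteq> q \<Longrightarrow> q = p"
  unfolding m_ultrafilter_def by blast

lemma mem_mhat_iff: "p \<in> mhat X M A \<longleftrightarrow> m_ultrafilter X M p \<and> A \<in> p"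
  by (simp add: mhat_def mbeta_def)

lemma m_filter_Union_chain:
  assumes "C \<noteq> {}" and filters: "\<And>p. p \<in> C \<Longrightarrow> m_filter X M p"
    and comparable: "\<And>p q. p \<in> C \<Longrightarrow> q \<in> C \<Longrightarrow> p \<subseteq> q \<or> q \<subseteq> p"
  shows "m_filter X M (\<Union>C)"
proof (rule m_filterI)
  show "\<Union>C \<subseteq> M" "{} \<notin> \<Union>C"
    using filters m_filter_sets m_filter_empty by blast+
  show "X \<in> \<Union>C" using \<open>C \<noteq> {}\<close> filters m_filter_space by blast
  show "B \<in> \<Union>C" if "A \<in> \<Union>C" "B \<in> M" "A \<subseteq> B" for A B
    using that filters m_filter_upward by blast
  show "A \<inter> B \<in> \<Union>C" if AB: "A \<in> \<Union>C" "B \<in> \<Union>C" for A B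
  proof -
    obtain p q where "p \<in> C" "q \<in> C" "A \<in> p" "B \<in> q"
      using AB by blast
    then show ?thesis
      using comparable[of p q] filters m_filter_Int by blast
  qed
qed

lemma m_filter_extends_to_m_ultrafilter:
  assumes "m_filter X M F"
  obtains p where "m_ultrafilter X M p" "F \<subseteq> p"
proof -
  let ?\<A> = "{q. m_filter X M q \<and> F \<subseteq> q}"
  have "\<exists>p\<in>?\<A>. \<forall>q\<in>?\<A>. p \<subseteq> q \<longrightarrow> q = p"
  proof (rule subset_Zorn_nonempty)
    show "?\<A> \<noteq> {}" using assms by blast
    show "\<Union>C \<in> ?\<A>" if "C \<noteq> {}" "subset.chain ?\<A> C" for C
      using that m_filter_Union_chain[of C X M] unfolding subset_chain_def by blast
  qed
  then obtain p where "p \<in> ?\<A>" and "\<forall>q\<in>?\<A>. p \<subseteq> q \<longrightarrow> q = p" by blast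
  then have "m_ultrafilter X M p"
    unfolding m_ultrafilter_def by blast
  with \<open>p \<in> ?\<A>\<close> show thesis using that by blast
qed

lemma generate_topology_on_base:
  assumes Int_closed: "\<And>S T. S \<in> \<S> \<Longrightarrow> T \<in> \<S> \<Longrightarrow> S \<inter> T \<in> \<S>"
    and "generate_topology_on \<S> U" "x \<in> U"
  shows "\<exists>B\<in>\<S>. x \<in> B \<and> B \<subseteq> U"
  using assms(2,3)
proof (induction arbitrary: x)
  case Empty
  then show ?case by simp
next
  case (Int U V)
  then obtain S T where S: "S \<in> \<S>" "x \<in> S" "S \<subseteq> U" and T: "T \<in> \<S>" "x \<in> T" "T \<subseteq> V"
    by (meson IntD1 IntD2)
  have "S \<inter> T \<in> \<S>" using Int_closed[OF S(1) T(1)] .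
  with S T show ?case by blast
next
  case (UN K)
  then obtain k where "k \<in> K" "x \<in> k" by blast
  then obtain B where "B \<in> \<S>" "x \<in> B" "B \<subseteq> k" using UN.IH by meson
  with \<open>k \<in> K\<close> show ?case by blast
next
  case (Basis S)
  then show ?case by blast
qed

definition Xstar_hat :: "'a set \<Rightarrow> 'a set set \<Rightarrow> 'a set \<Rightarrow> 'a set set set" where
  "Xstar_hat X M A = mhat X M A \<inter> Xstar X M"

context algebra
begin

lemma m_ultrafilter_compl:
  assumes p: "m_ultrafilter \<Omega> M p" and A: "A \<in> M" "A \<notin> p"
  shows "\<Omega> - A \<in> p"
proof -
  have f: "m_filter \<Omega> M p" using p by (rule m_ultrafilter_filter)
  define q where "q = {C \<in> M. \<exists>P\<in>p. P - A \<subseteq> C}"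
  have "m_filter \<Omega> M q"
  proof (rule m_filterI)
    show "q \<subseteq> M" "\<Omega> \<in> q"
      using m_filter_space[OF f] unfolding q_def by auto
    show "{} \<notin> q"
    proof
      assume "{} \<in> q"
      then obtain P where "P \<in> p" "P \<subseteq> A" unfolding q_def by blast
      then show False using A m_filter_upward[OF f] by blast
    qed
    show "D \<in> q" if "C \<in> q" "D \<in> M" "C \<subseteq> D" for C D
      using that unfolding q_def by blast
    show "C \<inter> D \<in> q" if "C \<in> q" "D \<in> q" for C D
    proof -
      obtain P Q where "P \<in> p" "P - A \<subseteq> C" "Q \<in> p" "Q - A \<subseteq> D"
        using \<open>C \<in> q\<close> \<open>D \<in> q\<close> unfolding q_def by blast
      then have "P \<inter> Q \<in> p" "P \<inter> Q - A \<subseteq> C \<inter> D"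
        using m_filter_Int[OF f] by blast+
      with \<open>C \<in> q\<close> \<open>D \<in> q\<close> show ?thesis unfolding q_def by blast
    qed
  qed
  moreover have "p \<subseteq> q"
    using m_filter_sets[OF f] unfolding q_def by blast
  ultimately have "q = p" by (rule m_ultrafilter_maximal[OF p])
  moreover have "\<Omega> - A \<in> q"
    using m_filter_space[OF f] A(1) unfolding q_def by blast
  ultimately show ?thesis by simp
qed

lemma m_ultrafilter_Un:
  assumes p: "m_ultrafilter \<Omega> M p" and A: "A \<in> M" and B: "B \<in> M" and AB: "A \<union> B \<in> p"
  shows "A \<in> p \<or> B \<in> p"
proof (cases "A \<in> p")
  case False
  have f: "m_filter \<Omega> M p" using p by (rule m_ultrafilter_filter)
  have "\<Omega> - A \<in> p" using m_ultrafilter_compl[OF p A False] .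
  then have "(A \<union> B) \<inter> (\<Omega> - A) \<in> p" using AB by (rule m_filter_Int[OF f, rotated])
  moreover have "(A \<union> B) \<inter> (\<Omega> - A) \<subseteq> B" by blast
  ultimately show ?thesis using m_filter_upward[OF f _ B] by blast
qed simp

lemma mhat_Int:
  assumes "A \<in> M" "B \<in> M"
  shows "mhat \<Omega> M (A \<inter> B) = mhat \<Omega> M A \<inter> mhat \<Omega> M B"
proof -
  have "A \<inter> B \<in> p \<longleftrightarrow> A \<in> p \<and> B \<in> p" if "m_ultrafilter \<Omega> M p" for p
  proof -
    have f: "m_filter \<Omega> M p" using that by (rule m_ultrafilter_filter)
    show ?thesis
      using assms m_filter_Int[OF f] m_filter_upward[OF f, of "A \<inter> B"] by blast
  qed
  then show ?thesis
    by (auto simp: mem_mhat_iff)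
qed

lemma topspace_mbeta_topology: "topspace (mbeta_topology \<Omega> M) = mbeta \<Omega> M"
proof -
  have "mhat \<Omega> M \<Omega> = mbeta \<Omega> M"
    by (auto simp: mhat_def mbeta_def intro: m_filter_space m_ultrafilter_filter)
  then have "\<Union>{mhat \<Omega> M A | A. A \<in> M} = mbeta \<Omega> M"
    by (auto simp: mhat_def)
  then show ?thesis
    by (simp add: mbeta_topology_def)
qed

lemma openin_mhat: "A \<in> M \<Longrightarrow> openin (mbeta_topology \<Omega> M) (mhat \<Omega> M A)"
  unfolding mbeta_topology_def by (rule topology_generated_by_Basis) blast

lemma topspace_Xstar_topology: "topspace (Xstar_topology \<Omega> M) = Xstar \<Omega> M"
  unfolding Xstar_topology_def topspace_subtopology topspace_mbeta_topology Xstar_def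
  by blast

lemma openin_Xstar_hat:
  assumes "A \<in> M"
  shows "openin (Xstar_topology \<Omega> M) (Xstar_hat \<Omega> M A)"
  unfolding Xstar_topology_def Xstar_hat_def
  using openin_mhat[OF assms] by (rule openin_subtopology_Int)

lemma Xstar_hat_Int:
  assumes "A \<in> M" "B \<in> M"
  shows "Xstar_hat \<Omega> M (A \<inter> B) = Xstar_hat \<Omega> M A \<inter> Xstar_hat \<Omega> M B"
  unfolding Xstar_hat_def mhat_Int[OF assms] by blast

lemma openin_Xstar_topology_base:
  assumes "openin (Xstar_topology \<Omega> M) U" "p \<in> U"
  obtains A where "A \<in> M" "p \<in> Xstar_hat \<Omega> M A" "Xstar_hat \<Omega> M A \<subseteq> U"
proof -
  obtain V where V: "openin (mbeta_topology \<Omega> M) V" "U = V \<inter> Xstar \<Omega> M"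
    using assms(1) unfolding Xstar_topology_def openin_subtopology by blast
  have "\<exists>B\<in>{mhat \<Omega> M A | A. A \<in> M}. p \<in> B \<and> B \<subseteq> V"
  proof (rule generate_topology_on_base)
    show "S \<inter> T \<in> {mhat \<Omega> M A | A. A \<in> M}"
      if ST: "S \<in> {mhat \<Omega> M A | A. A \<in> M}" "T \<in> {mhat \<Omega> M A | A. A \<in> M}" for S T
    proof -
      obtain A B where "A \<in> M" "B \<in> M" "S = mhat \<Omega> M A" "T = mhat \<Omega> M B"
        using ST by blast
      then have "S \<inter> T = mhat \<Omega> M (A \<inter> B)" "A \<inter> B \<in> M"
        by (simp_all add: mhat_Int Int)
      then show ?thesis by blast
    qed
    show "generate_topology_on {mhat \<Omega> M A | A. A \<in> M} V"
      using V(1) unfolding mbeta_topology_def openin_topology_generated_by_iff .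
    show "p \<in> V" using V(2) assms(2) by blast
  qed
  then obtain A where "A \<in> M" "p \<in> mhat \<Omega> M A" "mhat \<Omega> M A \<subseteq> V"
    by blast
  moreover have "p \<in> Xstar \<Omega> M" using V(2) assms(2) by blast
  ultimately show thesis
    using that[of A] unfolding Xstar_hat_def V(2) by blast
qed

end

locale algebra_finite_sets = algebra +
  assumes finite_sets: "\<And>F. finite F \<Longrightarrow> F \<subseteq> \<Omega> \<Longrightarrow> F \<in> M"
begin

lemma m_ultrafilter_eq_membed:
  assumes p: "m_ultrafilter \<Omega> M p" and "x \<in> \<Omega>" "{x} \<in> p"
  shows "p = membed M x"
proof -
  have f: "m_filter \<Omega> M p" using p by (rule m_ultrafilter_filter)
  have "m_filter \<Omega> M (membed M x)"
    by (rule m_filterI) (use \<open>x \<in> \<Omega>\<close> in \<open>auto simp: membed_def\<close>)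
  moreover have "p \<subseteq> membed M x"
  proof
    fix C assume "C \<in> p"
    then have "C \<inter> {x} \<in> p" using \<open>{x} \<in> p\<close> by (rule m_filter_Int[OF f])
    then have "C \<inter> {x} \<noteq> {}" using m_filter_empty[OF f] by metis
    with \<open>C \<in> p\<close> show "C \<in> membed M x"
      using m_filter_sets[OF f] unfolding membed_def by blast
  qed
  ultimately show ?thesis by (rule m_ultrafilter_maximal[OF p, symmetric])
qed

lemma m_ultrafilter_finite_imp_singleton:
  assumes p: "m_ultrafilter \<Omega> M p" and "finite F" "F \<in> p"
  shows "\<exists>x\<in>F. {x} \<in> p"
  using assms(2,3)
proof (induction F)
  case empty
  then show ?case using m_filter_empty[OF m_ultrafilter_filter[OF p]] by blast
next
  case (insert x F)
  have "insert x F \<subseteq> \<Omega>"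
    using sets_into_space m_filter_sets[OF m_ultrafilter_filter[OF p] insert.prems] by blast
  then have "{x} \<in> M" "F \<in> M" using finite_sets insert.hyps(1) by auto
  moreover have "{x} \<union> F \<in> p" using insert.prems by simp
  ultimately have "{x} \<in> p \<or> F \<in> p" by (rule m_ultrafilter_Un[OF p])
  then show ?case using insert.IH by blast
qed

lemma Xstar_mem_infinite:
  assumes "p \<in> Xstar \<Omega> M" "A \<in> p"
  shows "infinite A"
proof
  assume "finite A"
  have p: "m_ultrafilter \<Omega> M p" using assms(1) unfolding Xstar_def mbeta_def by blast
  then obtain x where "x \<in> A" "{x} \<in> p"
    using m_ultrafilter_finite_imp_singleton \<open>finite A\<close> assms(2) by blast
  moreover have "x \<in> \<Omega>"
    using \<open>x \<in> A\<close> sets_into_space m_filter_sets[OF m_ultrafilter_filter[OF p] assms(2)] by blast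
  ultimately have "p = membed M x" by (intro m_ultrafilter_eq_membed[OF p])
  with \<open>x \<in> \<Omega>\<close> assms(1) show False unfolding Xstar_def by blast
qed

lemma Xstar_hat_eq_empty_iff:
  assumes "A \<in> M"
  shows "Xstar_hat \<Omega> M A = {} \<longleftrightarrow> finite A"
proof
  show "finite A" if "Xstar_hat \<Omega> M A = {}"
  proof (rule ccontr)
    assume "infinite A"
    \<comment> \<open>Any ultrafilter extending \<open>F\<close> contains \<open>A\<close> and every cofinite set, so it is nonprincipal.\<close>
    define F where "F = {C \<in> M. finite (A - C)}"
    have "m_filter \<Omega> M F"
    proof (rule m_filterI)
      show "F \<subseteq> M" unfolding F_def by blast
      show "{} \<notin> F" using \<open>infinite A\<close> unfolding F_def by simp
      have "A - \<Omega> = {}" using sets_into_space[OF assms] by blast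
      then show "\<Omega> \<in> F" unfolding F_def by (metis (mono_tags) finite.emptyI mem_Collect_eq top)
      show "D \<in> F" if "C \<in> F" "D \<in> M" "C \<subseteq> D" for C D
      proof -
        have "A - D \<subseteq> A - C" using \<open>C \<subseteq> D\<close> by blast
        with that show ?thesis unfolding F_def using finite_subset by blast
      qed
      show "C \<inter> D \<in> F" if "C \<in> F" "D \<in> F" for C D
        using that unfolding F_def by (simp add: Diff_Int Int)
    qed
    then obtain p where p: "m_ultrafilter \<Omega> M p" "F \<subseteq> p"
      by (rule m_filter_extends_to_m_ultrafilter)
    have "A \<in> F" using assms unfolding F_def by simp
    with p(2) have "A \<in> p" by blast
    moreover have "p \<noteq> membed M x" if "x \<in> \<Omega>" for x
    proof -
      have "\<Omega> - {x} \<in> M" using finite_sets[of "{x}"] that by (simp add: compl_sets)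
      moreover have "A - (\<Omega> - {x}) \<subseteq> {x}" using sets_into_space[OF assms] by blast
      ultimately have "\<Omega> - {x} \<in> F" unfolding F_def using finite_subset by blast
      moreover have "\<Omega> - {x} \<notin> membed M x" by (simp add: membed_def)
      ultimately show ?thesis using p(2) by blast
    qed
    ultimately have "p \<in> Xstar_hat \<Omega> M A"
      using p(1) unfolding Xstar_hat_def Xstar_def mhat_def mbeta_def by blast
    with that show False by blast
  qed
  show "Xstar_hat \<Omega> M A = {}" if "finite A"
    using that Xstar_mem_infinite unfolding Xstar_hat_def mhat_def by blast
qed

lemma Xstar_hat_subset_if_finite_Diff:
  assumes "A \<in> M" "B \<in> M" "finite (B - A)"
  shows "Xstar_hat \<Omega> M B \<subseteq> Xstar_hat \<Omega> M A"
proof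
  fix p assume "p \<in> Xstar_hat \<Omega> M B"
  then have p: "m_ultrafilter \<Omega> M p" "p \<in> Xstar \<Omega> M" "B \<in> p"
    unfolding Xstar_hat_def mhat_def mbeta_def by auto
  have f: "m_filter \<Omega> M p" using p(1) by (rule m_ultrafilter_filter)
  have "(B \<inter> A) \<union> (B - A) \<in> p" using p(3) by (simp add: Un_Diff_Int Un_commute)
  then have "B \<inter> A \<in> p \<or> B - A \<in> p"
    using assms by (intro m_ultrafilter_Un[OF p(1)]) auto
  moreover have "B - A \<notin> p" using Xstar_mem_infinite[OF p(2)] assms(3) by blast
  ultimately have "A \<in> p" using m_filter_upward[OF f _ assms(1)] by blast
  with \<open>p \<in> Xstar_hat \<Omega> M B\<close> show "p \<in> Xstar_hat \<Omega> M A"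
    using p(1) unfolding Xstar_hat_def mhat_def mbeta_def by blast
qed

lemma nowhere_dense_Xstar_shrink:
  assumes N: "nowhere_dense (Xstar_topology \<Omega> M) N" and A: "A \<in> M" "infinite A"
  obtains B where "B \<in> M" "B \<subseteq> A" "infinite B" "Xstar_hat \<Omega> M B \<inter> N = {}"
proof -
  let ?T = "Xstar_topology \<Omega> M"
  have "\<not> Xstar_hat \<Omega> M A \<subseteq> ?T closure_of N"
  proof
    assume "Xstar_hat \<Omega> M A \<subseteq> ?T closure_of N"
    then have "Xstar_hat \<Omega> M A \<subseteq> ?T interior_of (?T closure_of N)"
      using openin_Xstar_hat[OF A(1)] by (rule interior_of_maximal)
    moreover have "Xstar_hat \<Omega> M A \<noteq> {}" using Xstar_hat_eq_empty_iff[OF A(1)] A(2) by simp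
    ultimately show False using N unfolding nowhere_dense_def by blast
  qed
  then obtain q where q: "q \<in> Xstar_hat \<Omega> M A - ?T closure_of N" by blast
  have "openin ?T (Xstar_hat \<Omega> M A - ?T closure_of N)"
    using openin_Xstar_hat[OF A(1)] by (rule openin_diff) simp
  then obtain C where C: "C \<in> M" "q \<in> Xstar_hat \<Omega> M C"
    "Xstar_hat \<Omega> M C \<subseteq> Xstar_hat \<Omega> M A - ?T closure_of N"
    using q by (rule openin_Xstar_topology_base)
  have AC: "Xstar_hat \<Omega> M (A \<inter> C) = Xstar_hat \<Omega> M C"
    using C(3) Xstar_hat_Int[OF A(1) C(1)] by blast
  show thesis
  proof (rule that)
    show "A \<inter> C \<in> M" "A \<inter> C \<subseteq> A" using A(1) C(1) by auto
    show "infinite (A \<inter> C)"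
      using C(2) Xstar_hat_eq_empty_iff[OF \<open>A \<inter> C \<in> M\<close>] unfolding AC by auto
    have "N \<subseteq> ?T closure_of N"
      using N by (simp add: nowhere_dense_def closure_of_subset)
    then show "Xstar_hat \<Omega> M (A \<inter> C) \<inter> N = {}"
      unfolding AC using C(3) by blast
  qed
qed

lemma nowhere_dense_XstarI:
  assumes "N \<subseteq> Xstar \<Omega> M"
    and shrink: "\<And>A. A \<in> M \<Longrightarrow> infinite A \<Longrightarrow>
      \<exists>B\<in>M. B \<subseteq> A \<and> infinite B \<and> Xstar_hat \<Omega> M B \<inter> N = {}"
  shows "nowhere_dense (Xstar_topology \<Omega> M) N"
proof -
  let ?T = "Xstar_topology \<Omega> M"
  have "p \<notin> ?T interior_of (?T closure_of N)" for p
  proof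
    assume "p \<in> ?T interior_of (?T closure_of N)"
    then obtain A where A: "A \<in> M" "p \<in> Xstar_hat \<Omega> M A"
      "Xstar_hat \<Omega> M A \<subseteq> ?T interior_of (?T closure_of N)"
      by (rule openin_Xstar_topology_base[OF openin_interior_of])
    have "infinite A" using Xstar_hat_eq_empty_iff[OF A(1)] A(2) by auto
    then obtain B where B: "B \<in> M" "B \<subseteq> A" "infinite B" "Xstar_hat \<Omega> M B \<inter> N = {}"
      using shrink[OF A(1)] by blast
    have "Xstar_hat \<Omega> M B \<subseteq> Xstar_hat \<Omega> M A"
    proof (rule Xstar_hat_subset_if_finite_Diff[OF A(1) B(1)])
      have "B - A = {}" using B(2) by blast
      then show "finite (B - A)" by (simp only: finite.emptyI)
    qed
    also have "\<dots> \<subseteq> ?T closure_of N"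
      using A(3) interior_of_subset by (rule order_trans)
    finally have "Xstar_hat \<Omega> M B = Xstar_hat \<Omega> M B \<inter> ?T closure_of N" by (rule Int_absorb2[symmetric])
    also have "\<dots> = {}"
      using openin_Int_closure_of_eq_empty[OF openin_Xstar_hat[OF B(1)]] B(4) by simp
    finally show False
      using B(3) Xstar_hat_eq_empty_iff[OF B(1)] by simp
  qed
  then show ?thesis
    using assms(1) by (auto simp: nowhere_dense_def topspace_Xstar_topology)
qed

end

lemma decseq_pseudo_intersection:
  fixes A :: "nat \<Rightarrow> 'a set"
  assumes "decseq A" and infinite: "\<And>n. infinite (A n)"
  obtains B where "countable B" "infinite B" "B \<subseteq> A 0" "\<And>n. finite (B - A n)"
proof -
  \<comment> \<open>\<open>F n\<close> consists of \<open>n\<close> distinct points, the \<open>k\<close>-th of them taken from \<open>A k\<close>.\<close>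
  define F where "F = rec_nat {} (\<lambda>n G. insert (SOME x. x \<in> A n - G) G)"
  have F_0: "F 0 = {}" and F_Suc: "F (Suc n) = insert (SOME x. x \<in> A n - F n) (F n)" for n
    by (simp_all add: F_def)
  have finite_F: "finite (F n)" for n
    by (induction n) (simp_all add: F_0 F_Suc)
  have new: "(SOME x. x \<in> A n - F n) \<in> A n - F n" for n
  proof -
    have "A n - F n \<noteq> {}" using Diff_infinite_finite[OF finite_F infinite] by (metis finite.emptyI)
    then show ?thesis by (simp only: some_in_eq not_False_eq_True)
  qed
  have card_F: "card (F n) = n" for n
    using new by (induction n) (simp_all add: F_0 F_Suc finite_F)
  have "incseq F"
    by (rule incseq_SucI) (auto simp: F_Suc)
  have F_subset: "F m \<subseteq> F n \<union> A n" for m n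
  proof (induction m)
    case (Suc m)
    show ?case
    proof (cases "m < n")
      case True
      then show ?thesis using \<open>incseq F\<close> by (auto dest: incseqD[of _ "Suc m" n])
    next
      case False
      then have "A m \<subseteq> A n" using \<open>decseq A\<close> by (simp add: decseq_def)
      then show ?thesis using Suc.IH new[of m] by (auto simp: F_Suc)
    qed
  qed (simp add: F_0)
  define B where "B = (\<Union>n. F n)"
  have "countable B" unfolding B_def using finite_F by (simp add: countable_finite)
  moreover have "infinite B"
  proof
    assume "finite B"
    then have "card (F (Suc (card B))) \<le> card B"
      unfolding B_def by (intro card_mono) auto
    then show False by (simp add: card_F)
  qed
  moreover have "B \<subseteq> A 0" using F_subset[of _ 0] unfolding B_def by (auto simp: F_0)
  moreover have "finite (B - A n)" for n
    using F_subset[of _ n] finite_F[of n] unfolding B_def by (auto intro: finite_subset)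
  ultimately show thesis using that by blast
qed

locale sigma_algebra_finite_sets = sigma_algebra + algebra_finite_sets

lemma (in sigma_algebra_finite_sets) nowhere_dense_Xstar_UN:
  fixes N :: "nat \<Rightarrow> 'a set set set"
  assumes N: "\<And>n. nowhere_dense (Xstar_topology \<Omega> M) (N n)"
  shows "nowhere_dense (Xstar_topology \<Omega> M) (\<Union>n. N n)"
proof (rule nowhere_dense_XstarI)
  show "(\<Union>n. N n) \<subseteq> Xstar \<Omega> M"
    using N by (auto simp: nowhere_dense_def topspace_Xstar_topology)
  fix A assume A: "A \<in> M" "infinite A"
  have "\<exists>f. \<forall>n. (f n \<in> M \<and> infinite (f n) \<and> f n \<subseteq> A) \<and>
    f (Suc n) \<subseteq> f n \<and> Xstar_hat \<Omega> M (f (Suc n)) \<inter> N n = {}"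
  proof (rule dependent_nat_choice)
    show "\<exists>C. C \<in> M \<and> infinite C \<and> C \<subseteq> A" using A by blast
    fix C n assume C: "C \<in> M \<and> infinite C \<and> C \<subseteq> A"
    then obtain D where "D \<in> M" "D \<subseteq> C" "infinite D" "Xstar_hat \<Omega> M D \<inter> N n = {}"
      using nowhere_dense_Xstar_shrink[OF N] by blast
    with C show "\<exists>D. (D \<in> M \<and> infinite D \<and> D \<subseteq> A) \<and> D \<subseteq> C \<and> Xstar_hat \<Omega> M D \<inter> N n = {}"
      by blast
  qed
  then obtain f where f: "\<And>n. f n \<in> M" "\<And>n. infinite (f n)" "f 0 \<subseteq> A"
    and f_Suc: "\<And>n. f (Suc n) \<subseteq> f n"
    and disjoint: "\<And>n. Xstar_hat \<Omega> M (f (Suc n)) \<inter> N n = {}"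
    by blast
  have "decseq f" using f_Suc by (rule decseq_SucI)
  then obtain B where B: "countable B" "infinite B" "B \<subseteq> f 0" "\<And>n. finite (B - f n)"
    using f(2) by (rule decseq_pseudo_intersection) blast
  have "B \<subseteq> \<Omega>" using B(3) sets_into_space[OF f(1)] by blast
  then have "{b} \<in> M" if "b \<in> B" for b
    using that by (intro finite_sets) auto
  then have "B \<in> M" using B(1) by (rule countable)
  moreover have "Xstar_hat \<Omega> M B \<inter> N n = {}" for n
    using Xstar_hat_subset_if_finite_Diff[OF f(1) \<open>B \<in> M\<close> B(4)] disjoint[of n] by blast
  ultimately show "\<exists>B\<in>M. B \<subseteq> A \<and> infinite B \<and> Xstar_hat \<Omega> M B \<inter> (\<Union>n. N n) = {}"
    using B f(3) by blast
qed

theorem theorem3p3: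
  fixes X :: "'a set" and M :: "'a set set" and \<N> :: "'a set set set set"
  assumes "sigma_algebra X M"
    and "infinite M"
    and "\<forall>F. finite F \<and> F \<subseteq> X \<longrightarrow> F \<in> M"
    and "countable \<N>"
    and "\<forall>N\<in>\<N>. nowhere_dense (Xstar_topology X M) N"
  shows "nowhere_dense (Xstar_topology X M) (\<Union>\<N>)"
proof (cases "\<N> = {}")
  case True
  then show ?thesis by (simp add: nowhere_dense_def)
next
  case False
  interpret sigma_algebra X M by (rule assms(1))
  interpret sigma_algebra_finite_sets X M
    by unfold_locales (use assms(3) in simp)
  have "nowhere_dense (Xstar_topology X M) (from_nat_into \<N> n)" for n
    using assms(5) from_nat_into[OF False] by blast
  then have "nowhere_dense (Xstar_topology X M) (\<Union>n. from_nat_into \<N> n)"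
    by (rule nowhere_dense_Xstar_UN)
  then show ?thesis
    by (simp add: range_from_nat_into[OF False assms(4)])
qed

end
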